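(* Let $X$, $Y$, $\tilde Y$ be categories and let $\tilde G\colon \tilde Y\to Y$ and $G\colon Y\to X$ be functors. Let $x_0$ be a locally initial object of $X$ and suppose that $y_0$ is an initial object of the full subcategory $Y_G(x_0)$ of $Y$. Suppose that $\tilde G$ admits a left adjoint $\tilde F\colon Y\to\tilde Y$. Then $\tilde F y_0$ is an initial object of the full subcategory $\tilde Y_{G\tilde G}(x_0)$ of $\tilde Y$. Moreover, $\tilde F z$ is a locally initial object of $\tilde Y$ for every locally initial object $z$ of $Y$.
   Context: An object $x_0$ of a category $X$ is locally initial if for every object $x$ of $X$ there exists at most one morphism $x_0\to x$. For a locally initial object $x_0$ of $X$ and a functor $G\colon Y\to X$, $Y_G(x_0)$ denotes the full subcategory of $Y$ consisting of all objects $y$ such that there exists a morphism $x_0\to Gy$ in $X$. (Thus $\tilde Y_{G\tilde G}(x_0)$ consists of all objects $\tilde y$ of $\tilde Y$ admitting a morphism $x_0\to G\tilde G\tilde y$.) *)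

theory Defs
  imports Main
begin

text \<open>Categories in arrow style: objects, arrows, domain, codomain, identities,
  composition (ccomp C g f means g after f).\<close>

record ('o, 'm) category =
  ob :: "'o set"
  ar :: "'m set"
  cdom :: "'m \<Rightarrow> 'o"
  ccod :: "'m \<Rightarrow> 'o"
  cid :: "'o \<Rightarrow> 'm"
  ccomp :: "'m \<Rightarrow> 'm \<Rightarrow> 'm"

definition hom :: "('o, 'm) category \<Rightarrow> 'o \<Rightarrow> 'o \<Rightarrow> 'm set" where
  "hom C a b = {f \<in> ar C. cdom C f = a \<and> ccod C f = b}"

definition is_category :: "('o, 'm) category \<Rightarrow> bool" where
  "is_category C \<longleftrightarrow>
     (\<forall>f \<in> ar C. cdom C f \<in> ob C \<and> ccod C f \<in> ob C) \<and>
     (\<forall>a \<in> ob C. cid C a \<in> hom C a a) \<and>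
     (\<forall>f \<in> ar C. \<forall>g \<in> ar C. ccod C f = cdom C g \<longrightarrow>
        ccomp C g f \<in> hom C (cdom C f) (ccod C g)) \<and>
     (\<forall>f \<in> ar C. ccomp C f (cid C (cdom C f)) = f \<and> ccomp C (cid C (ccod C f)) f = f) \<and>
     (\<forall>f \<in> ar C. \<forall>g \<in> ar C. \<forall>h \<in> ar C. ccod C f = cdom C g \<longrightarrow> ccod C g = cdom C h \<longrightarrow>
        ccomp C h (ccomp C g f) = ccomp C (ccomp C h g) f)"

record ('o1, 'm1, 'o2, 'm2) cfunctor =
  fo :: "'o1 \<Rightarrow> 'o2"
  fm :: "'m1 \<Rightarrow> 'm2"

definition is_functor ::
  "('o1, 'm1) category \<Rightarrow> ('o2, 'm2) category \<Rightarrow> ('o1, 'm1, 'o2, 'm2) cfunctor \<Rightarrow> bool" where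
  "is_functor C D F \<longleftrightarrow>
     (\<forall>a \<in> ob C. fo F a \<in> ob D \<and> fm F (cid C a) = cid D (fo F a)) \<and>
     (\<forall>f \<in> ar C. fm F f \<in> hom D (fo F (cdom C f)) (fo F (ccod C f))) \<and>
     (\<forall>f \<in> ar C. \<forall>g \<in> ar C. ccod C f = cdom C g \<longrightarrow>
        fm F (ccomp C g f) = ccomp D (fm F g) (fm F f))"

definition fcomp :: "('o2, 'm2, 'o3, 'm3) cfunctor \<Rightarrow> ('o1, 'm1, 'o2, 'm2) cfunctor
    \<Rightarrow> ('o1, 'm1, 'o3, 'm3) cfunctor" where
  "fcomp G F = \<lparr>fo = fo G \<circ> fo F, fm = fm G \<circ> fm F\<rparr>"

definition is_left_adjoint ::
  "('o1, 'm1) category \<Rightarrow> ('o2, 'm2) category \<Rightarrow> ('o1, 'm1, 'o2, 'm2) cfunctor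
     \<Rightarrow> ('o2, 'm2, 'o1, 'm1) cfunctor \<Rightarrow> bool" where
  "is_left_adjoint Y Yt F G \<longleftrightarrow>
     is_functor Y Yt F \<and> is_functor Yt Y G \<and>
     (\<exists>\<eta>. (\<forall>y \<in> ob Y. \<eta> y \<in> hom Y y (fo G (fo F y))) \<and>
          (\<forall>f \<in> ar Y. ccomp Y (\<eta> (ccod Y f)) f = ccomp Y (fm G (fm F f)) (\<eta> (cdom Y f))) \<and>
          (\<forall>y \<in> ob Y. \<forall>z \<in> ob Yt. \<forall>f \<in> hom Y y (fo G z).
              \<exists>!g. g \<in> hom Yt (fo F y) z \<and> ccomp Y (fm G g) (\<eta> y) = f))"

definition full_subcat :: "('o, 'm) category \<Rightarrow> 'o set \<Rightarrow> ('o, 'm) category" where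
  "full_subcat C S = C\<lparr>ob := S, ar := {f \<in> ar C. cdom C f \<in> S \<and> ccod C f \<in> S}\<rparr>"

definition initial :: "('o, 'm) category \<Rightarrow> 'o \<Rightarrow> bool" where
  "initial C x \<longleftrightarrow> x \<in> ob C \<and> (\<forall>y \<in> ob C. \<exists>!f. f \<in> hom C x y)"

definition locally_initial :: "('o, 'm) category \<Rightarrow> 'o \<Rightarrow> bool" where
  "locally_initial C x \<longleftrightarrow> x \<in> ob C \<and> (\<forall>y \<in> ob C. \<forall>f \<in> hom C x y. \<forall>g \<in> hom C x y. f = g)"

text \<open>Objects of Y_G(x0): those y admitting a morphism x0 \<rightarrow> G y in X.\<close>
definition under_obj :: "('a, 'ma) category \<Rightarrow> ('b, 'mb) category \<Rightarrow> ('b, 'mb, 'a, 'ma) cfunctor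
    \<Rightarrow> 'a \<Rightarrow> 'b set" where
  "under_obj X Y G x0 = {y \<in> ob Y. hom X x0 (fo G y) \<noteq> {}}"

end

theory Submission
  imports Defs
begin

text \<open>Transposition along the unit \<eta> of the adjunction, g \<mapsto> Gt g \<circ> \<eta> y, is a bijection
  from hom (Ft y) w onto hom y (Gt w). Hence Ft z inherits "at most one arrow out" from z.
  For the first claim, \<eta> y0 : y0 \<rightarrow> Gt (Ft y0) places Ft y0 in the subcategory, and for w in
  it Gt w lies in Y_G(x0), so hom (Ft y0) w is in bijection with the singleton hom y0 (Gt w).\<close>

lemma ob_full_subcat [simp]: "ob (full_subcat C S) = S"
  by (simp add: full_subcat_def)

lemma hom_full_subcat:
  "hom (full_subcat C S) a b = (if a \<in> S \<and> b \<in> S then hom C a b else {})"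
  by (auto simp: hom_def full_subcat_def)

lemma initial_full_subcat_iff:
  "initial (full_subcat C S) x \<longleftrightarrow> x \<in> S \<and> (\<forall>y \<in> S. \<exists>!f. f \<in> hom C x y)"
  by (auto simp: initial_def hom_full_subcat)

lemma comp_in_hom:
  assumes "is_category C" "f \<in> hom C a b" "g \<in> hom C b c"
  shows "ccomp C g f \<in> hom C a c"
  using assms unfolding is_category_def hom_def by auto

lemma functor_ob:
  assumes "is_functor C D F" "a \<in> ob C"
  shows "fo F a \<in> ob D"
  using assms by (simp add: is_functor_def)

lemma functor_hom:
  assumes "is_functor C D F" "f \<in> hom C a b"
  shows "fm F f \<in> hom D (fo F a) (fo F b)"
  using assms by (auto simp: is_functor_def hom_def)

lemma under_obj_fcomp:
  assumes "is_functor Yt Y Gt"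
  shows "w \<in> under_obj X Yt (fcomp G Gt) x0 \<longleftrightarrow> w \<in> ob Yt \<and> fo Gt w \<in> under_obj X Y G x0"
  using assms by (auto simp: under_obj_def fcomp_def functor_ob)

lemma under_obj_closed_hom:
  assumes "is_category X" "is_functor Y X G"
    and "y \<in> under_obj X Y G x0" "f \<in> hom Y y y'" "y' \<in> ob Y"
  shows "y' \<in> under_obj X Y G x0"
proof -
  from assms(3) obtain h where "h \<in> hom X x0 (fo G y)"
    by (auto simp: under_obj_def)
  then have "ccomp X (fm G f) h \<in> hom X x0 (fo G y')"
    using assms(1,2,4) by (blast intro: comp_in_hom functor_hom)
  then show ?thesis
    using assms(5) by (auto simp: under_obj_def)
qed

lemma left_adjoint_is_functor:
  assumes "is_left_adjoint Y Yt F G"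
  shows "is_functor Y Yt F" "is_functor Yt Y G"
  using assms unfolding is_left_adjoint_def by blast+

lemma left_adjoint_unit:
  assumes "is_category Y" "is_left_adjoint Y Yt F G"
  obtains \<eta> where "\<And>y. y \<in> ob Y \<Longrightarrow> \<eta> y \<in> hom Y y (fo G (fo F y))"
    and "\<And>y w. y \<in> ob Y \<Longrightarrow> w \<in> ob Yt \<Longrightarrow>
           bij_betw (\<lambda>g. ccomp Y (fm G g) (\<eta> y)) (hom Yt (fo F y) w) (hom Y y (fo G w))"
proof -
  note G = left_adjoint_is_functor(2)[OF assms(2)]
  from assms(2) obtain \<eta> where unit: "\<forall>y \<in> ob Y. \<eta> y \<in> hom Y y (fo G (fo F y))"
    and univ: "\<forall>y \<in> ob Y. \<forall>w \<in> ob Yt. \<forall>f \<in> hom Y y (fo G w).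
                 \<exists>!g. g \<in> hom Yt (fo F y) w \<and> ccomp Y (fm G g) (\<eta> y) = f"
    unfolding is_left_adjoint_def by blast
  have "bij_betw (\<lambda>g. ccomp Y (fm G g) (\<eta> y)) (hom Yt (fo F y) w) (hom Y y (fo G w))"
    if y: "y \<in> ob Y" and w: "w \<in> ob Yt" for y w
  proof (rule bij_betwI')
    fix g assume "g \<in> hom Yt (fo F y) w"
    then show "ccomp Y (fm G g) (\<eta> y) \<in> hom Y y (fo G w)"
      using assms(1) G unit y by (blast intro: comp_in_hom functor_hom)
  next
    fix g g' assume g: "g \<in> hom Yt (fo F y) w" and g': "g' \<in> hom Yt (fo F y) w"
    then have "ccomp Y (fm G g) (\<eta> y) \<in> hom Y y (fo G w)"
      using assms(1) G unit y by (blast intro: comp_in_hom functor_hom)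
    then show "ccomp Y (fm G g) (\<eta> y) = ccomp Y (fm G g') (\<eta> y) \<longleftrightarrow> g = g'"
      using univ y w g g' by metis
  next
    fix f assume "f \<in> hom Y y (fo G w)"
    then show "\<exists>g \<in> hom Yt (fo F y) w. f = ccomp Y (fm G g) (\<eta> y)"
      using univ y w by metis
  qed
  with unit that show thesis by blast
qed

lemma bij_betw_ex1_iff:
  assumes "bij_betw \<phi> A B"
  shows "(\<exists>!a. a \<in> A) \<longleftrightarrow> (\<exists>!b. b \<in> B)"
  using assms unfolding bij_betw_def inj_on_def by blast

lemma bij_betw_subsingleton:
  assumes "bij_betw \<phi> A B" "\<forall>b \<in> B. \<forall>b' \<in> B. b = b'"
  shows "\<forall>a \<in> A. \<forall>a' \<in> A. a = a'"
  using assms unfolding bij_betw_def inj_on_def by blast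

lemma left_adjoint_preserves_locally_initial:
  assumes "is_category Y" "is_left_adjoint Y Yt F G" "locally_initial Y z"
  shows "locally_initial Yt (fo F z)"
proof -
  obtain \<eta> where "\<And>y. y \<in> ob Y \<Longrightarrow> \<eta> y \<in> hom Y y (fo G (fo F y))"
    and transpose: "\<And>y w. y \<in> ob Y \<Longrightarrow> w \<in> ob Yt \<Longrightarrow>
      bij_betw (\<lambda>g. ccomp Y (fm G g) (\<eta> y)) (hom Yt (fo F y) w) (hom Y y (fo G w))"
    using left_adjoint_unit[OF assms(1,2)] by metis
  note F = left_adjoint_is_functor(1)[OF assms(2)]
    and G = left_adjoint_is_functor(2)[OF assms(2)]
  from assms(3) have z: "z \<in> ob Y"
    unfolding locally_initial_def by blast
  have "\<forall>g \<in> hom Yt (fo F z) w. \<forall>g' \<in> hom Yt (fo F z) w. g = g'" if "w \<in> ob Yt" for w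
  proof (rule bij_betw_subsingleton[OF transpose[OF z that]])
    show "\<forall>f \<in> hom Y z (fo G w). \<forall>f' \<in> hom Y z (fo G w). f = f'"
      using assms(3) functor_ob[OF G that] unfolding locally_initial_def by blast
  qed
  then show ?thesis
    using functor_ob[OF F z] unfolding locally_initial_def by blast
qed

lemma left_adjoint_preserves_initial_under_obj:
  assumes "is_category X" "is_category Y" "is_functor Y X G" "is_left_adjoint Y Yt F Gt"
    and "initial (full_subcat Y (under_obj X Y G x0)) y0"
  shows "initial (full_subcat Yt (under_obj X Yt (fcomp G Gt) x0)) (fo F y0)"
proof -
  let ?S = "under_obj X Y G x0" and ?T = "under_obj X Yt (fcomp G Gt) x0"
  obtain \<eta> where unit: "\<And>y. y \<in> ob Y \<Longrightarrow> \<eta> y \<in> hom Y y (fo Gt (fo F y))"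
    and transpose: "\<And>y w. y \<in> ob Y \<Longrightarrow> w \<in> ob Yt \<Longrightarrow>
      bij_betw (\<lambda>g. ccomp Y (fm Gt g) (\<eta> y)) (hom Yt (fo F y) w) (hom Y y (fo Gt w))"
    using left_adjoint_unit[OF assms(2,4)] by metis
  note F = left_adjoint_is_functor(1)[OF assms(4)]
    and Gt = left_adjoint_is_functor(2)[OF assms(4)]
  from assms(5) have y0: "y0 \<in> ?S" and y0_initial: "\<forall>y \<in> ?S. \<exists>!f. f \<in> hom Y y0 y"
    by (simp_all add: initial_full_subcat_iff)
  from y0 have y0_ob: "y0 \<in> ob Y"
    by (simp add: under_obj_def)
  have "fo Gt (fo F y0) \<in> ?S"
    using under_obj_closed_hom[OF assms(1,3) y0 unit[OF y0_ob]] F Gt y0_ob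
    by (simp add: functor_ob)
  then have "fo F y0 \<in> ?T"
    using F Gt y0_ob by (simp add: under_obj_fcomp functor_ob)
  moreover have "\<exists>!g. g \<in> hom Yt (fo F y0) w" if "w \<in> ?T" for w
    using that y0_initial bij_betw_ex1_iff[OF transpose[OF y0_ob]]
    by (simp add: under_obj_fcomp[OF Gt])
  ultimately show ?thesis
    by (simp add: initial_full_subcat_iff)
qed

theorem theorem2p3:
  fixes X :: "('a, 'ma) category" and Y :: "('b, 'mb) category" and Yt :: "('c, 'mc) category"
    and Gt :: "('c, 'mc, 'b, 'mb) cfunctor" and G :: "('b, 'mb, 'a, 'ma) cfunctor"
    and Ft :: "('b, 'mb, 'c, 'mc) cfunctor"
  assumes "is_category X" and "is_category Y" and "is_category Yt"
    and "is_functor Yt Y Gt" and "is_functor Y X G"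
    and "locally_initial X x0"
    and "initial (full_subcat Y (under_obj X Y G x0)) y0"
    and "is_left_adjoint Y Yt Ft Gt"
  shows "initial (full_subcat Yt (under_obj X Yt (fcomp G Gt) x0)) (fo Ft y0)
         \<and> (\<forall>z. locally_initial Y z \<longrightarrow> locally_initial Yt (fo Ft z))"
  using left_adjoint_preserves_initial_under_obj[OF assms(1,2,5,8,7)]
    left_adjoint_preserves_locally_initial[OF assms(2,8)]
  by blast

end
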